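(* Let $(\mathcal W,\rhd)$ be a well-founded frame. If $A\cong B$, then $\mathcal I[A]^\eta_p=\mathcal I[B]^\eta_p$ for every hereditary type environment $\eta$ and every $p\in\mathcal W$.
   Context: Type expressions: fix a countably infinite set of type variables $X,Y,Z,\dots$. Pseudo type expressions are generated by $A::=X\mid A\to A\mid \bullet A\mid \mu X.A$ ($\mu$ binds $X$; $\alpha$-convertible expressions are identified; $\to$ associates to the right; $\bullet$ binds tighter than $\to$, which binds tighter than $\mu$). $A[B/X]$ denotes capture-avoiding substitution. $\top$ abbreviates $\mu X.\bullet X$, and $\bullet^n A$ denotes $A$ prefixed by $n$ copies of $\bullet$. The tail $t(A)$ is defined by $t(X)=X$, $t(A\to B)=t(B)$, $t(\bullet A)=\bullet t(A)$, $t(\mu X.A)=\mu X.t(A)$; it always has the form $\bullet^{m_0}\mu X_1.\bullet^{m_1}\mu X_2.\cdots\mu X_n.\bullet^{m_n}Y$. $A$ is a $\top$-variant iff $Y=X_i$ for some $1\le i\le n$ with $X_i\notin\{X_{i+1},\dots,X_n\}$ and $m_i+\dots+m_n\ge 1$. $A$ is proper in $X$ iff: a variable $Y$ is proper in $X$ iff $Y\neq X$; $\bullet A$ is always proper in $X$; $A\to B$ is proper in $X$ iff both $A,B$ are proper in $X$ or $B$ is a $\top$-variant; for $Y\ne X$, $\mu Y.A$ is proper in $X$ iff $A$ is proper in $X$ or $\mu Y.A$ is a $\top$-variant. Type expressions are the least set of pseudo type expressions containing all type variables, closed under $\to$ and $\bullet$, and containing $\mu X.A$ whenever it contains $A$ and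 $A$ is proper in $X$. Equality: $\cong$ is the least relation on type expressions such that: $A\cong A$; $A\cong B$ implies $B\cong A$; $A\cong B$ and $B\cong C$ imply $A\cong C$; $A\cong B$ implies $\bullet A\cong\bullet B$; $A\cong C$ and $B\cong D$ imply $A\to B\cong C\to D$; $A\to\top\cong\top$; $\mu X.A\cong A[\mu X.A/X]$; and if $A\cong C[A/X]$ with $C$ proper in $X$, then $A\cong\mu X.C$. $\simeq$ is the least relation satisfying the same closure conditions and additionally $\bullet(A\to B)\simeq\bullet A\to\bullet B$. Semantics: a syntactical $\lambda$-algebra $(\mathcal V,\cdot,[\![-]\!])$ consists of a nonempty set $\mathcal V$, a map $\cdot:\mathcal V\times\mathcal V\to\mathcal V$, and values $[\![M]\!]_\rho\in\mathcal V$ for untyped $\lambda$-terms $M$ and maps $\rho$ from individual variables to $\mathcal V$, such that $[\![x]\!]_\rho=\rho(x)$, $[\![MN]\!]_\rho=[\![M]\!]_\rho\cdot[\![N]\!]_\rho$, $[\![\lambda x.M]\!]_\rho\cdot v=[\![M]\!]_{\rho[v/x]}$, $[\![M]\!]_\rho$ depends only on $\rho$ restricted to free variables of $M$, and $M=_\beta N$ implies $[\![M]\!]_\rho=[\![N]\!]_\rho$; fix one. A well-founded frame is a pair $(\mathcal W,\rhd)$ with $\mathcal W$ nonempty and $\rhd$ a binary relation on $\mathcal W$ admitting no infinite chain $p_0\rhd p_1\rhd p_2\rhd\cdots$; $\trianglerighteq$ denotes the reflexive-transitive closure of $\rhd$. A type environment $\eta$ assigns a set $\eta(X)_p\subseteq\mathcal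 V$ to each type variable $X$ and world $p$; it is hereditary if $p\rhd q$ implies $\eta(X)_p\subseteq\eta(X)_q$. For hereditary $\eta$, $\mathcal I[A]^\eta_p\subseteq\mathcal V$ is defined (by well-founded induction on $p$ and the syntactic rank of $A$) by: $\mathcal I[A]^\eta_p=\mathcal V$ if $A$ is a $\top$-variant; otherwise $\mathcal I[X]^\eta_p=\eta(X)_p$; $\mathcal I[\bullet A]^\eta_p=\{u\mid u\in\mathcal I[A]^\eta_q\text{ for all }q\text{ with }p\rhd q\}$; $\mathcal I[A\to B]^\eta_p=\{u\mid \text{for all }q\text{ with }p\trianglerighteq q\text{ and all }v\in\mathcal I[A]^\eta_q,\ u\cdot v\in\mathcal I[B]^\eta_q\}$; $\mathcal I[\mu X.A]^\eta_p=\mathcal I[A[\mu X.A/X]]^\eta_p$. *)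

theory Defs
  imports Main
begin

text \<open>Type variables are natural numbers (de Bruijn indices); \<open>Mu A\<close> binds index 0 in \<open>A\<close>.
  Free type variables are the indices not bound by an enclosing \<open>Mu\<close>.\<close>

datatype ty = TVar nat | Arr ty ty | Later ty | Mu ty

fun lift :: "nat \<Rightarrow> ty \<Rightarrow> ty" where
  "lift k (TVar i) = TVar (if i < k then i else Suc i)"
| "lift k (Arr A B) = Arr (lift k A) (lift k B)"
| "lift k (Later A) = Later (lift k A)"
| "lift k (Mu A) = Mu (lift (Suc k) A)"

text \<open>\<open>subst k B A\<close> is the capture-avoiding substitution \<open>A[B/X]\<close> where \<open>X\<close> is the variable with index \<open>k\<close>
  (the binder of \<open>X\<close> being removed, indices above \<open>k\<close> are decremented).\<close>
fun subst :: "nat \<Rightarrow> ty \<Rightarrow> ty \<Rightarrow> ty" where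
  "subst k B (TVar i) = (if i < k then TVar i else if i = k then B else TVar (i - 1))"
| "subst k B (Arr A1 A2) = Arr (subst k B A1) (subst k B A2)"
| "subst k B (Later A) = Later (subst k B A)"
| "subst k B (Mu A) = Mu (subst (Suc k) (lift 0 B) A)"

definition Top :: ty where
  "Top = Mu (Later (TVar 0))"

fun tail :: "ty \<Rightarrow> ty" where
  "tail (TVar X) = TVar X"
| "tail (Arr A B) = tail B"
| "tail (Later A) = Later (tail A)"
| "tail (Mu A) = Mu (tail A)"

text \<open>Auxiliary for \<open>\<top>\<close>-variants: \<open>gs ! j\<close> records whether some \<open>\<bullet>\<close> occurs between the binder
  of index \<open>j\<close> (counted from the current position) and the current position.\<close>
fun tv_aux :: "bool list \<Rightarrow> ty \<Rightarrow> bool" where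
  "tv_aux gs (TVar j) = (j < length gs \<and> gs ! j)"
| "tv_aux gs (Arr A B) = tv_aux gs B"
| "tv_aux gs (Later A) = tv_aux (map (\<lambda>_. True) gs) A"
| "tv_aux gs (Mu A) = tv_aux (False # gs) A"

text \<open>\<open>A\<close> is a \<open>\<top>\<close>-variant iff its tail \<open>\<bullet>^m0 \<mu>X1. ... \<mu>Xn. \<bullet>^mn Y\<close> has \<open>Y\<close> bound by some binder
  \<open>X_i\<close> (the innermost one of that name, automatically in de Bruijn notation) with
  \<open>m_i + ... + m_n \<ge> 1\<close>.\<close>
definition top_variant :: "ty \<Rightarrow> bool" where
  "top_variant A = tv_aux [] (tail A)"

fun proper :: "nat \<Rightarrow> ty \<Rightarrow> bool" where
  "proper k (TVar i) = (i \<noteq> k)"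
| "proper k (Later A) = True"
| "proper k (Arr A B) = ((proper k A \<and> proper k B) \<or> top_variant B)"
| "proper k (Mu A) = (proper (Suc k) A \<or> top_variant (Mu A))"

inductive type_expr :: "ty \<Rightarrow> bool" where
  "type_expr (TVar X)"
| "type_expr A \<Longrightarrow> type_expr B \<Longrightarrow> type_expr (Arr A B)"
| "type_expr A \<Longrightarrow> type_expr (Later A)"
| "type_expr A \<Longrightarrow> proper 0 A \<Longrightarrow> type_expr (Mu A)"

inductive tcong :: "ty \<Rightarrow> ty \<Rightarrow> bool" where
  refl: "type_expr A \<Longrightarrow> tcong A A"
| sym: "tcong A B \<Longrightarrow> tcong B A"
| trans: "tcong A B \<Longrightarrow> tcong B C \<Longrightarrow> tcong A C"
| later: "tcong A B \<Longrightarrow> tcong (Later A) (Later B)"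
| arr: "tcong A C \<Longrightarrow> tcong B D \<Longrightarrow> tcong (Arr A B) (Arr C D)"
| arr_top: "type_expr A \<Longrightarrow> tcong (Arr A Top) Top"
| unfold: "type_expr (Mu A) \<Longrightarrow> tcong (Mu A) (subst 0 (Mu A) A)"
| fold: "type_expr A \<Longrightarrow> type_expr C \<Longrightarrow> proper 0 C \<Longrightarrow> tcong A (subst 0 A C) \<Longrightarrow> tcong A (Mu C)"

datatype lterm = LVar nat | LApp lterm lterm | LAbs lterm

fun llift :: "nat \<Rightarrow> lterm \<Rightarrow> lterm" where
  "llift k (LVar i) = LVar (if i < k then i else Suc i)"
| "llift k (LApp M N) = LApp (llift k M) (llift k N)"
| "llift k (LAbs M) = LAbs (llift (Suc k) M)"

fun lsubst :: "nat \<Rightarrow> lterm \<Rightarrow> lterm \<Rightarrow> lterm" where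
  "lsubst k N (LVar i) = (if i < k then LVar i else if i = k then N else LVar (i - 1))"
| "lsubst k N (LApp M1 M2) = LApp (lsubst k N M1) (lsubst k N M2)"
| "lsubst k N (LAbs M) = LAbs (lsubst (Suc k) (llift 0 N) M)"

fun lfv :: "lterm \<Rightarrow> nat set" where
  "lfv (LVar i) = {i}"
| "lfv (LApp M N) = lfv M \<union> lfv N"
| "lfv (LAbs M) = (\<lambda>i. i - 1) ` (lfv M - {0})"

inductive beta :: "lterm \<Rightarrow> lterm \<Rightarrow> bool" where
  "beta (LApp (LAbs M) N) (lsubst 0 N M)"
| "beta M M' \<Longrightarrow> beta (LApp M N) (LApp M' N)"
| "beta N N' \<Longrightarrow> beta (LApp M N) (LApp M N')"
| "beta M M' \<Longrightarrow> beta (LAbs M) (LAbs M')"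

definition beta_eq :: "lterm \<Rightarrow> lterm \<Rightarrow> bool" where
  "beta_eq = equivclp beta"

definition env_cons :: "'v \<Rightarrow> (nat \<Rightarrow> 'v) \<Rightarrow> nat \<Rightarrow> 'v" where
  "env_cons v \<rho> n = (case n of 0 \<Rightarrow> v | Suc m \<Rightarrow> \<rho> m)"

text \<open>The carrier \<open>\<V>\<close> is the (nonempty) type \<open>'v\<close>.\<close>
definition syn_lambda_algebra :: "('v \<Rightarrow> 'v \<Rightarrow> 'v) \<Rightarrow> (lterm \<Rightarrow> (nat \<Rightarrow> 'v) \<Rightarrow> 'v) \<Rightarrow> bool" where
  "syn_lambda_algebra app sem \<longleftrightarrow>
     (\<forall>x \<rho>. sem (LVar x) \<rho> = \<rho> x)
   \<and> (\<forall>M N \<rho>. sem (LApp M N) \<rho> = app (sem M \<rho>) (sem N \<rho>))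
   \<and> (\<forall>M \<rho> v. app (sem (LAbs M) \<rho>) v = sem M (env_cons v \<rho>))
   \<and> (\<forall>M \<rho> \<rho>'. (\<forall>x\<in>lfv M. \<rho> x = \<rho>' x) \<longrightarrow> sem M \<rho> = sem M \<rho>')
   \<and> (\<forall>M N \<rho>. beta_eq M N \<longrightarrow> sem M \<rho> = sem N \<rho>)"

text \<open>The set of worlds is the (nonempty) type \<open>'w\<close>.\<close>
definition wf_frame :: "('w \<Rightarrow> 'w \<Rightarrow> bool) \<Rightarrow> bool" where
  "wf_frame rel \<longleftrightarrow> \<not> (\<exists>f :: nat \<Rightarrow> 'w. \<forall>n. rel (f n) (f (Suc n)))"

definition hereditary :: "('w \<Rightarrow> 'w \<Rightarrow> bool) \<Rightarrow> (nat \<Rightarrow> 'w \<Rightarrow> 'v set) \<Rightarrow> bool" where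
  "hereditary rel \<eta> \<longleftrightarrow> (\<forall>X p q. rel p q \<longrightarrow> \<eta> X p \<subseteq> \<eta> X q)"

text \<open>Syntactic rank: decreases along the non-world-decreasing recursive calls of the interpretation.\<close>
fun rank :: "ty \<Rightarrow> nat" where
  "rank A = (if top_variant A then 0 else
     (case A of TVar _ \<Rightarrow> 0
              | Later _ \<Rightarrow> 0
              | Arr B C \<Rightarrow> Suc (max (rank B) (rank C))
              | Mu B \<Rightarrow> Suc (rank B)))"

definition interp_rel :: "('w \<Rightarrow> 'w \<Rightarrow> bool) \<Rightarrow> (('w \<times> ty) \<times> ('w \<times> ty)) set" where
  "interp_rel rel = {((q, B), (p, A)). rel\<^sup>+\<^sup>+ p q \<or> (q = p \<and> rank B < rank A)}"

definition interp_step :: "('w \<Rightarrow> 'w \<Rightarrow> bool) \<Rightarrow> ('v \<Rightarrow> 'v \<Rightarrow> 'v) \<Rightarrow> (nat \<Rightarrow> 'w \<Rightarrow> 'v set)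
    \<Rightarrow> (('w \<times> ty) \<Rightarrow> 'v set) \<Rightarrow> ('w \<times> ty) \<Rightarrow> 'v set" where
  "interp_step rel app \<eta> f pA = (case pA of (p, A) \<Rightarrow>
     (if top_variant A then UNIV else
       (case A of
          TVar X \<Rightarrow> \<eta> X p
        | Later B \<Rightarrow> {u. \<forall>q. rel p q \<longrightarrow> u \<in> f (q, B)}
        | Arr B C \<Rightarrow> {u. \<forall>q. rel\<^sup>*\<^sup>* p q \<longrightarrow> (\<forall>v \<in> f (q, B). app u v \<in> f (q, C))}
        | Mu B \<Rightarrow> f (p, subst 0 (Mu B) B))))"

definition interp :: "('w \<Rightarrow> 'w \<Rightarrow> bool) \<Rightarrow> ('v \<Rightarrow> 'v \<Rightarrow> 'v) \<Rightarrow> (nat \<Rightarrow> 'w \<Rightarrow> 'v set) \<Rightarrow> ty \<Rightarrow> 'w \<Rightarrow> 'v set" where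
  "interp rel app \<eta> A p = wfrec (interp_rel rel) (interp_step rel app \<eta>) (p, A)"

end

theory Submission
  imports Defs
begin

text \<open>Each rule of \<open>\<cong>\<close> is respected by the interpretation; only the fixed-point rule needs an
  argument. If \<open>C\<close> is proper in \<open>X\<close>, every occurrence of \<open>X\<close> in \<open>C\<close> is either guarded by a \<open>\<bullet>\<close> or
  sits in a \<open>\<top>\<close>-variant position, so \<open>\<I>[C[D/X]]\<^sub>p\<close> depends on \<open>D\<close> only through its values at worlds
  strictly below \<open>p\<close>. Hence, if \<open>A\<close> and \<open>\<mu>X.C\<close> both satisfy \<open>D \<cong> C[D/X]\<close>, well-founded induction on
  the frame shows that they have the same interpretation at every world.\<close>

declare rank.simps [simp del]

lemma rank_TVar [simp]: "rank (TVar i) = 0"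
  by (simp add: rank.simps)

lemma rank_Later [simp]: "rank (Later A) = 0"
  by (simp add: rank.simps)

lemma rank_Arr: "rank (Arr A B) = (if top_variant (Arr A B) then 0 else Suc (max (rank A) (rank B)))"
  by (simp add: rank.simps)

lemma rank_Mu: "rank (Mu A) = (if top_variant (Mu A) then 0 else Suc (rank A))"
  by (simp add: rank.simps)

lemma rank_top_variant: "top_variant A \<Longrightarrow> rank A = 0"
  by (simp add: rank.simps)

lemma top_variant_Later [simp]: "top_variant (Later A) = top_variant A"
  by (simp add: top_variant_def)

lemma top_variant_Arr [simp]: "top_variant (Arr A B) = top_variant B"
  by (simp add: top_variant_def)

lemma tv_aux_append: "tv_aux gs A \<Longrightarrow> tv_aux (gs @ hs) A"
  by (induction gs A arbitrary: hs rule: tv_aux.induct) (auto simp: nth_append)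

lemma tv_aux_tail_lift: "tv_aux gs (tail A) \<Longrightarrow> length gs \<le> k \<Longrightarrow> tv_aux gs (tail (lift k A))"
  by (induction A arbitrary: gs k) auto

lemma top_variant_lift: "top_variant A \<Longrightarrow> top_variant (lift k A)"
  unfolding top_variant_def by (rule tv_aux_tail_lift) auto

lemma tv_aux_tail_subst:
  "tv_aux gs (tail A) \<Longrightarrow> (k < length gs \<Longrightarrow> top_variant D)
    \<Longrightarrow> tv_aux (take k gs @ drop (Suc k) gs) (tail (subst k D A))"
proof (induction A arbitrary: gs k D)
  case (TVar j)
  consider "j < k" | "j = k" | "k < j" by linarith
  then show ?case
  proof cases
    case 2
    then have "tv_aux ([] @ (take k gs @ drop (Suc k) gs)) (tail D)"
      using TVar by (intro tv_aux_append) (auto simp: top_variant_def)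
    with 2 show ?thesis by simp
  qed (use TVar in \<open>auto simp: nth_append min_def\<close>)
next
  case (Later A)
  then show ?case
    using Later.IH[of "map (\<lambda>_. True) gs" k D] by (auto simp: take_map drop_map)
next
  case (Mu A)
  then show ?case
    using Mu.IH[of "False # gs" "Suc k" "lift 0 D"] by (auto simp: top_variant_lift)
qed auto

lemma top_variant_subst: "top_variant A \<Longrightarrow> top_variant (subst k D A)"
  using tv_aux_tail_subst[of "[]" A k D] by (simp add: top_variant_def)

lemma top_variant_unfold: "top_variant (Mu A) \<Longrightarrow> top_variant (subst 0 (Mu A) A)"
  using tv_aux_tail_subst[of "[False]" A 0 "Mu A"] by (simp add: top_variant_def)

lemma proper_lift: "proper j D \<Longrightarrow> proper (if j < k then j else Suc j) (lift k D)"
proof (induction D arbitrary: j k)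
  case (Arr D1 D2)
  then show ?case
    using Arr.IH[of j k] by (cases "j < k") (auto simp: top_variant_lift)
next
  case (Mu D)
  then show ?case
    using Mu.IH[of "Suc j" "Suc k"] top_variant_lift[of "Mu D" k] by (cases "j < k") auto
qed auto

lemma proper_lift_self: "proper k (lift k D)"
  by (induction D arbitrary: k) auto

lemma proper_subst:
  "proper (if j < k then j else Suc j) A \<Longrightarrow> proper j D \<Longrightarrow> proper j (subst k D A)"
proof (induction A arbitrary: j k D)
  case (Mu A)
  then show ?case
    using Mu.IH[of "Suc j" "Suc k" "lift 0 D"] proper_lift[OF Mu.prems(2), of 0]
      top_variant_subst[of "Mu A" k D]
    by (auto split: if_splits)
qed (auto simp: top_variant_subst split: if_splits)

lemma proper_subst_Mu: "proper 0 A \<Longrightarrow> proper 0 (subst (Suc k) (lift 0 D) A)"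
  using proper_subst[of 0 "Suc k" A "lift 0 D"] proper_lift_self[of 0 D] by simp

lemma type_expr_lift: "type_expr A \<Longrightarrow> type_expr (lift k A)"
proof (induction arbitrary: k rule: type_expr.induct)
  case (4 A)
  then show ?case using proper_lift[OF 4(2), of "Suc k"] by (auto intro: type_expr.intros)
qed (auto intro: type_expr.intros)

lemma type_expr_subst: "type_expr A \<Longrightarrow> type_expr D \<Longrightarrow> type_expr (subst k D A)"
proof (induction arbitrary: k D rule: type_expr.induct)
  case (4 A)
  then show ?case
    using "4.IH"[OF type_expr_lift[OF "4.prems"]] proper_subst_Mu[OF 4(2)]
    by (auto intro: type_expr.intros)
qed (auto intro: type_expr.intros)

lemma rank_subst_le: "proper k A \<Longrightarrow> rank (subst k D A) \<le> rank A"
proof (induction A arbitrary: k D)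
  case (Arr A1 A2)
  show ?case
  proof (cases "top_variant A2")
    case False
    with Arr have "rank (subst k D A1) \<le> rank A1" "rank (subst k D A2) \<le> rank A2"
      by auto
    with False show ?thesis by (auto simp: rank_Arr)
  qed (simp add: rank_Arr top_variant_subst)
next
  case (Mu A)
  show ?case
  proof (cases "top_variant (Mu A)")
    case True
    then have "top_variant (subst k D (Mu A))" by (rule top_variant_subst)
    then show ?thesis by (simp only: rank_top_variant)
  qed (use Mu in \<open>auto simp: rank_Mu\<close>)
qed auto

lemma rank_unfold_less:
  "proper 0 A \<Longrightarrow> \<not> top_variant (Mu A) \<Longrightarrow> rank (subst 0 (Mu A) A) < rank (Mu A)"
  using rank_subst_le[of 0 A "Mu A"] by (simp add: rank_Mu)

lemma lift_lift: "i \<le> k \<Longrightarrow> lift (Suc k) (lift i A) = lift i (lift k A)"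
  by (induction A arbitrary: i k) auto

lemma lift_subst_ge: "j \<le> i \<Longrightarrow> lift i (subst j D A) = subst j (lift i D) (lift (Suc i) A)"
  by (induction A arbitrary: i j D) (auto simp: lift_lift)

lemma lift_subst_le: "i \<le> j \<Longrightarrow> lift i (subst j D A) = subst (Suc j) (lift i D) (lift i A)"
  by (induction A arbitrary: i j D) (auto simp: lift_lift)

lemma subst_lift: "subst k D (lift k A) = A"
  by (induction A arbitrary: k D) auto

lemma subst_subst:
  "i \<le> j \<Longrightarrow> subst i (subst j E D) (subst (Suc j) (lift i E) A) = subst j E (subst i D A)"
  by (induction A arbitrary: i j D E)
     (auto simp: subst_lift lift_subst_ge lift_subst_le lift_lift[symmetric])

lemma wf_frame_tranclp:
  assumes "wf_frame rel"
  shows "wf {(q, p). rel\<^sup>+\<^sup>+ p q}"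
proof -
  have "wf ({(p, q). rel p q}\<inverse>)"
    using assms unfolding wf_frame_def wf_iff_no_infinite_down_chain by auto
  then have "wf (({(p, q). rel p q}\<^sup>+)\<inverse>)"
    using wf_trancl trancl_converse by metis
  then show ?thesis
    by (simp add: tranclp_unfold converse_unfold)
qed

lemma wf_interp_rel: "wf_frame rel \<Longrightarrow> wf (interp_rel rel)"
proof -
  assume "wf_frame rel"
  then have "wf ({(q, p). rel\<^sup>+\<^sup>+ p q} <*lex*> measure rank)"
    by (simp add: wf_frame_tranclp wf_lex_prod)
  moreover have "interp_rel rel = {(q, p). rel\<^sup>+\<^sup>+ p q} <*lex*> measure rank"
    unfolding interp_rel_def by auto
  ultimately show ?thesis by simp
qed

context
  fixes rel :: "'w \<Rightarrow> 'w \<Rightarrow> bool" and app :: "'v \<Rightarrow> 'v \<Rightarrow> 'v" and \<eta> :: "nat \<Rightarrow> 'w \<Rightarrow> 'v set"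
  assumes wf: "wf_frame rel"
begin

lemma interp_eq_interp_step:
  "interp rel app \<eta> A p =
     interp_step rel app \<eta> (cut (\<lambda>(q, B). interp rel app \<eta> B q) (interp_rel rel) (p, A)) (p, A)"
proof -
  have "(\<lambda>(q, B). interp rel app \<eta> B q) = wfrec (interp_rel rel) (interp_step rel app \<eta>)"
    by (auto simp: interp_def)
  then show ?thesis
    unfolding interp_def by (simp add: wfrec[OF wf_interp_rel[OF wf]])
qed

lemma cut_interp_below:
  "rel\<^sup>+\<^sup>+ p q \<or> (q = p \<and> rank B < rank A) \<Longrightarrow>
     cut (\<lambda>(q, B). interp rel app \<eta> B q) (interp_rel rel) (p, A) (q, B) = interp rel app \<eta> B q"
  by (simp add: cut_apply interp_rel_def)

lemma interp_top_variant: "top_variant A \<Longrightarrow> interp rel app \<eta> A p = UNIV"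
  by (subst interp_eq_interp_step) (simp add: interp_step_def)

lemma interp_Later: "interp rel app \<eta> (Later A) p = {u. \<forall>q. rel p q \<longrightarrow> u \<in> interp rel app \<eta> A q}"
proof (cases "top_variant A")
  case True
  then show ?thesis by (simp add: interp_top_variant)
next
  case False
  then show ?thesis
    by (subst interp_eq_interp_step) (simp add: interp_step_def cut_interp_below tranclp.r_into_trancl)
qed

lemma interp_Arr:
  "interp rel app \<eta> (Arr A B) p =
     {u. \<forall>q. rel\<^sup>*\<^sup>* p q \<longrightarrow> (\<forall>v \<in> interp rel app \<eta> A q. app u v \<in> interp rel app \<eta> B q)}"
proof (cases "top_variant B")
  case True
  then show ?thesis by (simp add: interp_top_variant)
next
  case False
  then have "rank A < rank (Arr A B)" "rank B < rank (Arr A B)"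
    by (auto simp: rank_Arr)
  then have "cut (\<lambda>(q, B). interp rel app \<eta> B q) (interp_rel rel) (p, Arr A B) (q, C) =
      interp rel app \<eta> C q" if "rel\<^sup>*\<^sup>* p q" "C \<in> {A, B}" for q C
    using that by (intro cut_interp_below) (auto dest: rtranclpD)
  with False show ?thesis
    by (subst interp_eq_interp_step) (simp add: interp_step_def)
qed

lemma interp_Mu: "proper 0 A \<Longrightarrow> interp rel app \<eta> (Mu A) p = interp rel app \<eta> (subst 0 (Mu A) A) p"
proof (cases "top_variant (Mu A)")
  case True
  then show ?thesis by (simp add: interp_top_variant top_variant_unfold)
next
  case False
  moreover assume "proper 0 A"
  ultimately show ?thesis
    by (subst interp_eq_interp_step)
       (simp add: interp_step_def cut_interp_below rank_unfold_less del: subst.simps)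
qed

lemma interp_subst_Mu:
  assumes "proper 0 A"
  shows "interp rel app \<eta> (subst k D (Mu A)) p = interp rel app \<eta> (subst k D (subst 0 (Mu A) A)) p"
proof -
  have "interp rel app \<eta> (subst k D (Mu A)) p =
      interp rel app \<eta> (subst 0 (subst k D (Mu A)) (subst (Suc k) (lift 0 D) A)) p"
    using interp_Mu[OF proper_subst_Mu[OF assms]] by simp
  also have "\<dots> = interp rel app \<eta> (subst k D (subst 0 (Mu A) A)) p"
    unfolding subst_subst[OF le0] ..
  finally show ?thesis .
qed

subsection \<open>Contractiveness of proper substitution\<close>

text \<open>The second hypothesis lets the statement pass under \<open>\<bullet>\<close>, below which \<open>C\<close> need no longer be
  proper in \<open>k\<close>.\<close>

lemma interp_subst_contractive:
  assumes "type_expr C"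
    and "\<And>r. rel\<^sup>+\<^sup>+ p r \<Longrightarrow> interp rel app \<eta> D1 r = interp rel app \<eta> D2 r"
    and "\<not> proper k C \<Longrightarrow> interp rel app \<eta> D1 p = interp rel app \<eta> D2 p"
  shows "interp rel app \<eta> (subst k D1 C) p = interp rel app \<eta> (subst k D2 C) p"
  using assms
proof (induction "(p, C)" arbitrary: p C rule: wf_induct_rule[OF wf_interp_rel[OF wf]])
  case (1 p C)
  let ?I = "interp rel app \<eta>"
  have IH_below: "?I (subst k D1 X) q = ?I (subst k D2 X) q"
    if "rel\<^sup>+\<^sup>+ p q" "type_expr X" for q X
    using that "1.prems"(2) by (intro "1.hyps") (auto simp: interp_rel_def intro: tranclp_trans)
  have IH_here: "?I (subst k D1 X) p = ?I (subst k D2 X) p"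
    if "rank X < rank C" "type_expr X" "\<not> proper k X \<Longrightarrow> \<not> proper k C" for X
    using that "1.prems"(2,3) by (intro "1.hyps") (auto simp: interp_rel_def)
  show ?case
  proof (cases C)
    case (TVar i)
    with "1.prems"(3) show ?thesis by auto
  next
    case (Later C')
    with "1.prems"(1) have "type_expr C'"
      by (auto elim: type_expr.cases)
    with Later show ?thesis
      by (simp add: interp_Later IH_below tranclp.r_into_trancl)
  next
    case (Arr B C')
    show ?thesis
    proof (cases "top_variant C'")
      case True
      with Arr show ?thesis by (simp add: interp_top_variant top_variant_subst)
    next
      case False
      have "?I (subst k D1 X) q = ?I (subst k D2 X) q" if "rel\<^sup>*\<^sup>* p q" "X \<in> {B, C'}" for q X
      proof -
        have "type_expr X" and "rank X < rank C" and "\<not> proper k X \<Longrightarrow> \<not> proper k C"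
          using that(2) "1.prems"(1) Arr False by (auto simp: rank_Arr elim: type_expr.cases)
        with that(1) IH_below IH_here show ?thesis
          by (metis rtranclpD)
      qed
      with Arr show ?thesis by (simp add: interp_Arr)
    qed
  next
    case (Mu A)
    show ?thesis
    proof (cases "top_variant (Mu A)")
      case True
      with Mu show ?thesis using top_variant_subst[OF True] by (simp add: interp_top_variant)
    next
      case False
      have "proper 0 A" "type_expr A"
        using "1.prems"(1) Mu by (auto elim: type_expr.cases)
      define U where "U = subst 0 (Mu A) A"
      have "?I (subst k D1 U) p = ?I (subst k D2 U) p"
      proof (rule IH_here)
        show "rank U < rank C"
          using rank_unfold_less[OF \<open>proper 0 A\<close> False] Mu by (simp add: U_def)
        show "type_expr U"
          using "1.prems"(1) Mu \<open>type_expr A\<close> by (simp add: U_def type_expr_subst)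
        show "\<not> proper k U \<Longrightarrow> \<not> proper k C"
          using False Mu unfolding U_def by (auto intro: proper_subst)
      qed
      with Mu show ?thesis
        by (simp only: interp_subst_Mu[OF \<open>proper 0 A\<close>] U_def)
    qed
  qed
qed

lemma interp_fixed_point_unique:
  assumes "type_expr C" "proper 0 C"
    and fp: "\<And>p. interp rel app \<eta> A p = interp rel app \<eta> (subst 0 A C) p"
  shows "interp rel app \<eta> A p = interp rel app \<eta> (Mu C) p"
proof (induction p rule: wf_induct_rule[OF wf_frame_tranclp[OF wf]])
  case (1 p)
  have "interp rel app \<eta> A p = interp rel app \<eta> (subst 0 A C) p" by (rule fp)
  also have "\<dots> = interp rel app \<eta> (subst 0 (Mu C) C) p"
    using assms(1,2) 1 by (intro interp_subst_contractive) auto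
  also have "\<dots> = interp rel app \<eta> (Mu C) p"
    using interp_Mu[OF assms(2)] by simp
  finally show ?case .
qed

lemma interp_tcong: "tcong A B \<Longrightarrow> interp rel app \<eta> A p = interp rel app \<eta> B p"
proof (induction arbitrary: p rule: tcong.induct)
  case (arr_top A)
  have "top_variant Top" by (simp add: Top_def top_variant_def)
  then show ?case by (simp add: interp_top_variant)
next
  case (unfold A)
  then show ?case by (auto simp: interp_Mu elim: type_expr.cases)
next
  case (fold A C)
  then show ?case by (intro interp_fixed_point_unique)
qed (simp_all add: interp_Later interp_Arr)

end

theorem theorem4:
  fixes app :: "'v \<Rightarrow> 'v \<Rightarrow> 'v"
    and sem :: "lterm \<Rightarrow> (nat \<Rightarrow> 'v) \<Rightarrow> 'v"
    and rel :: "'w \<Rightarrow> 'w \<Rightarrow> bool"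
    and \<eta> :: "nat \<Rightarrow> 'w \<Rightarrow> 'v set"
    and A B :: ty and p :: 'w
  assumes "syn_lambda_algebra app sem"
    and "wf_frame rel"
    and "tcong A B"
    and "hereditary rel \<eta>"
  shows "interp rel app \<eta> A p = interp rel app \<eta> B p"
  using interp_tcong[OF assms(2,3)] .

end
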